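(* For every integer $d\ge1$ there is a constant $c(d)>0$ depending only on $d$ such that for every integer $t\ge2$, $VC(\mathcal{G}(t))\le c(d)\cdot t\ln t$.
   Context: $\mathcal{T}(t)$ is the set of partitions of $[0,1]^d$ with exactly $t$ cells that arise as the leaves of a Mondrian tree, i.e. of a binary tree obtained by starting from $[0,1]^d$ and repeatedly splitting a leaf cell $\mathcal{C}$ along an axis-aligned hyperplane into $\{x\in\mathcal{C}:x_J\le s\}$ and $\{x\in\mathcal{C}:x_J>s\}$. $\mathcal{G}(t)=\{\sum_{j=1}^t c_j\mathbb{I}(x\in\mathcal{C}_j):c_j\in\mathbb{R},\ \{\mathcal{C}_1,\dots,\mathcal{C}_t\}\in\mathcal{T}(t)\}$. For a real function $f$ on $\mathcal{X}$, its subgraph is $\{(x,y)\in\mathcal{X}\times\mathbb{R}:f(x)>y\}$; a collection of sets shatters a finite set of points if every subset of it can be written as its intersection with a member of the collection; the VC dimension $VC(\mathcal{F})$ of a function class $\mathcal{F}$ is the largest size of a set of points in $\mathcal{X}\times\mathbb{R}$ shattered by the subgraphs of the functions in $\mathcal{F}$. *)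

theory Defs
  imports "HOL-Analysis.Analysis"
begin

text \<open>Points of [0,1]^d are represented as functions nat => real whose
coordinates i < d lie in [0,1] and whose coordinates i >= d are 0.\<close>
definition unit_cube :: "nat \<Rightarrow> (nat \<Rightarrow> real) set" where
  "unit_cube d = {x. (\<forall>i<d. 0 \<le> x i \<and> x i \<le> 1) \<and> (\<forall>i\<ge>d. x i = 0)}"

text \<open>Mondrian partitions: leaves of binary trees obtained from [0,1]^d by
repeatedly splitting a leaf cell C along an axis-aligned hyperplane x_J = s
into {x in C. x_J <= s} and {x in C. x_J > s} (both pieces nonempty, so
that the result is again a partition into cells).\<close>
inductive_set mondrian :: "nat \<Rightarrow> (nat \<Rightarrow> real) set set set" for d where
  root: "{unit_cube d} \<in> mondrian d"
| split: "\<lbrakk> P \<in> mondrian d; C \<in> P; J < d;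
            {x\<in>C. x J \<le> s} \<noteq> {}; {x\<in>C. x J > s} \<noteq> {} \<rbrakk>
          \<Longrightarrow> (P - {C}) \<union> {{x\<in>C. x J \<le> s}, {x\<in>C. x J > s}} \<in> mondrian d"

definition mondrian_t :: "nat \<Rightarrow> nat \<Rightarrow> (nat \<Rightarrow> real) set set set" where
  "mondrian_t d t = {P \<in> mondrian d. card P = t}"

definition G_class :: "nat \<Rightarrow> nat \<Rightarrow> ((nat \<Rightarrow> real) \<Rightarrow> real) set" where
  "G_class d t = {f. \<exists>P \<in> mondrian_t d t. \<exists>c :: (nat \<Rightarrow> real) set \<Rightarrow> real.
       f = (\<lambda>x. \<Sum>C\<in>P. c C * indicator C x)}"

definition subgraph :: "'a set \<Rightarrow> ('a \<Rightarrow> real) \<Rightarrow> ('a \<times> real) set" where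
  "subgraph X f = {(x, y). x \<in> X \<and> f x > y}"

definition shatters :: "'a set \<Rightarrow> ('a \<Rightarrow> real) set \<Rightarrow> ('a \<times> real) set \<Rightarrow> bool" where
  "shatters X F S \<longleftrightarrow> (\<forall>T \<subseteq> S. \<exists>f \<in> F. T = S \<inter> subgraph X f)"

definition vc_dim :: "'a set \<Rightarrow> ('a \<Rightarrow> real) set \<Rightarrow> ereal" where
  "vc_dim X F = Sup {ereal (real (card S)) | S. finite S \<and> S \<subseteq> X \<times> UNIV \<and> shatters X F S}"

end

(*
  Every cell of a Mondrian partition is an axis-parallel box, so the subgraph of a function
  in G(t) is a union of t cylinders box \<times> (-\<infinity>, c).  On a set S of n points each of the 2d+1
  families of half-spaces {x\<^sub>j > a}, {x\<^sub>j \<le> b}, {y < c} cuts out a chain of subsets of S,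
  hence at most n + 1 of them; so the cylinders cut out at most (n+1)^(2d+1) subsets of S and
  the subgraphs of G(t) at most (n+1)^((2d+1)t).  If S is shattered, 2^n \<le> (n+1)^((2d+1)t),
  which forces n = O(t ln t).
*)
theory Submission
  imports Defs
begin

definition half_open_box :: "nat \<Rightarrow> (nat \<Rightarrow> real) \<Rightarrow> (nat \<Rightarrow> real) \<Rightarrow> (nat \<Rightarrow> real) set" where
  "half_open_box d a b = {x \<in> unit_cube d. \<forall>j<d. a j < x j \<and> x j \<le> b j}"

lemma half_open_box_split_le:
  "J < d \<Longrightarrow> {x \<in> half_open_box d a b. x J \<le> s} = half_open_box d a (b(J := min (b J) s))"
  unfolding half_open_box_def by (auto split: if_splits)

lemma half_open_box_split_gt:
  "J < d \<Longrightarrow> {x \<in> half_open_box d a b. s < x J} = half_open_box d (a(J := max (a J) s)) b"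
  unfolding half_open_box_def by (auto split: if_splits)

lemma unit_cube_eq_half_open_box: "unit_cube d = half_open_box d (\<lambda>_. -1) (\<lambda>_. 1)"
  by (force simp: half_open_box_def unit_cube_def)

lemma mondrian_finite: "P \<in> mondrian d \<Longrightarrow> finite P"
  by (induction rule: mondrian.induct) auto

lemma partition_on_split_block:
  assumes P: "partition_on A P" and "C \<in> P" "C\<^sub>1 \<noteq> {}" "C\<^sub>2 \<noteq> {}" "C\<^sub>1 \<union> C\<^sub>2 = C" "C\<^sub>1 \<inter> C\<^sub>2 = {}"
  shows "partition_on A (P - {C} \<union> {C\<^sub>1, C\<^sub>2})"
proof -
  have "\<Union>(P - {C} \<union> {C\<^sub>1, C\<^sub>2}) = \<Union>(P - {C}) \<union> C"
    using assms(5) by auto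
  also have "\<dots> = A"
    using assms(2) partition_onD1[OF P] by auto
  finally have cover: "\<Union>(P - {C} \<union> {C\<^sub>1, C\<^sub>2}) = A" .
  have "disjnt D C" if "D \<in> P - {C}" for D
    using that assms(2) partition_onD2[OF P] by (metis DiffE pairwiseD singletonI)
  then have "disjnt D C\<^sub>1" "disjnt D C\<^sub>2" if "D \<in> P - {C}" for D
    using that assms(5) by (auto intro: disjnt_subset2)
  moreover have "disjoint (P - {C})"
    using partition_onD2[OF P] by (rule pairwise_subset) auto
  moreover have "disjnt C\<^sub>1 C\<^sub>2"
    using assms(6) by (simp add: disjnt_def)
  ultimately have "disjoint (insert C\<^sub>1 (insert C\<^sub>2 (P - {C})))"
    by (auto simp: pairwise_insert intro: disjnt_sym)
  moreover have "{} \<notin> P - {C} \<union> {C\<^sub>1, C\<^sub>2}"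
    using assms(3,4) partition_onD3[OF P] by auto
  ultimately show ?thesis
    using cover unfolding partition_on_def by simp
qed

lemma mondrian_partition_on: "P \<in> mondrian d \<Longrightarrow> partition_on (unit_cube d) P"
proof (induction rule: mondrian.induct)
  case root
  have "(\<lambda>_. 0) \<in> unit_cube d" by (simp add: unit_cube_def)
  then show ?case by (intro partition_on_space) auto
next
  case (split P C J s)
  \<comment> \<open>the induction rule states the nonemptiness hypotheses as inequalities of predicates\<close>
  have "{x \<in> C. x J \<le> s} \<noteq> {}" "{x \<in> C. s < x J} \<noteq> {}"
    using split.hyps(4,5) unfolding fun_eq_iff by auto
  then show ?case
  proof (rule partition_on_split_block[OF split.IH split.hyps(2)])
    show "{x \<in> C. x J \<le> s} \<union> {x \<in> C. s < x J} = C" by auto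
    show "{x \<in> C. x J \<le> s} \<inter> {x \<in> C. s < x J} = {}" by auto
  qed
qed

lemma mondrian_cell_is_box:
  "P \<in> mondrian d \<Longrightarrow> C \<in> P \<Longrightarrow> \<exists>a b. C = half_open_box d a b"
proof (induction arbitrary: C rule: mondrian.induct)
  case root
  then show ?case using unit_cube_eq_half_open_box by blast
next
  case (split P C' J s)
  obtain a b where ab: "C' = half_open_box d a b"
    using split.IH split.hyps(2) by blast
  from split.prems consider "C \<in> P" | "C = {x \<in> C'. x J \<le> s}" | "C = {x \<in> C'. s < x J}"
    by blast
  then show ?case
    using split.IH half_open_box_split_le[OF split.hyps(3)] half_open_box_split_gt[OF split.hyps(3)]
    unfolding ab by cases blast+
qed

lemma subgraph_sum_indicator_partition:
  assumes "partition_on X P" "finite P"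
  shows "subgraph X (\<lambda>x. \<Sum>C\<in>P. c C * indicator C x) = (\<Union>C\<in>P. C \<times> {..<c C})"
proof -
  have "(\<Sum>C'\<in>P. c C' * indicator C' x) = c C" if "C \<in> P" "x \<in> C" for C x
    using assms that partition_onD2[OF assms(1)]
    by (intro sum_indicator_disjoint_family[where A = "\<lambda>C. C"])
       (auto simp: disjoint_family_on_def disjoint_def)
  then show ?thesis
    using partition_onD1[OF assms(1)] by (auto simp: subgraph_def)
qed

definition traces :: "'a set \<Rightarrow> 'a set set \<Rightarrow> 'a set set" where
  "traces S F = (\<lambda>A. S \<inter> A) ` F"

lemma finite_traces: "finite S \<Longrightarrow> finite (traces S F)"
  unfolding traces_def by (rule finite_subset[of _ "Pow S"]) auto

lemma traces_subsetI:
  assumes "\<And>A. A \<in> F \<Longrightarrow> \<exists>B\<in>G. S \<inter> A = S \<inter> B"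
  shows "traces S F \<subseteq> traces S G"
proof
  fix T assume "T \<in> traces S F"
  then obtain A where "A \<in> F" "T = S \<inter> A"
    unfolding traces_def by blast
  with assms show "T \<in> traces S G"
    unfolding traces_def by blast
qed

lemma traces_mono: "F \<subseteq> G \<Longrightarrow> traces S F \<subseteq> traces S G"
  unfolding traces_def by (rule image_mono)

lemma shatters_iff_Pow_subset_traces: "shatters X F S \<longleftrightarrow> Pow S \<subseteq> traces S (subgraph X ` F)"
  unfolding shatters_def traces_def image_image by blast

lemma chain_subset_range_monotone:
  fixes A :: "'b::linorder \<Rightarrow> 'a set"
  assumes "mono A \<or> antimono A"
  shows "chain\<^sub>\<subseteq> (range A)"
  using assms unfolding chain_subset_def mono_def antimono_def by (metis linear rangeE)

lemma card_traces_chain: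
  assumes "finite S" "chain\<^sub>\<subseteq> F"
  shows "card (traces S F) \<le> card S + 1"
proof -
  \<comment> \<open>the traces form a chain of subsets of S, so they are told apart by their cardinalities\<close>
  have "inj_on card (traces S F)"
  proof (rule inj_onI)
    fix A B assume "A \<in> traces S F" "B \<in> traces S F" "card A = card B"
    moreover have "finite A" "finite B" "A \<subseteq> B \<or> B \<subseteq> A"
      using calculation assms unfolding traces_def chain_subset_def by (auto intro: finite_subset)
    ultimately show "A = B" by (metis card_subset_eq)
  qed
  moreover have "card ` traces S F \<subseteq> {0..card S}"
    using assms(1) unfolding traces_def by (auto intro: card_mono)
  ultimately have "card (traces S F) \<le> card {0..card S}"
    by (intro card_inj_on_le) auto
  then show ?thesis by simp
qed

lemma card_traces_strict_sublevel_sets: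
  fixes \<phi> :: "'a \<Rightarrow> real"
  assumes "finite S"
  shows "card (traces S (range (\<lambda>c. {p. \<phi> p < c}))) \<le> card S + 1"
  using assms by (intro card_traces_chain chain_subset_range_monotone) (auto simp: mono_def)

lemma card_traces_sublevel_sets:
  fixes \<phi> :: "'a \<Rightarrow> real"
  assumes "finite S"
  shows "card (traces S (range (\<lambda>c. {p. \<phi> p \<le> c}))) \<le> card S + 1"
  using assms by (intro card_traces_chain chain_subset_range_monotone) (auto simp: mono_def)

lemma card_traces_strict_superlevel_sets:
  fixes \<phi> :: "'a \<Rightarrow> real"
  assumes "finite S"
  shows "card (traces S (range (\<lambda>c. {p. c < \<phi> p}))) \<le> card S + 1"
  using assms by (intro card_traces_chain chain_subset_range_monotone) (auto simp: antimono_def)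

lemma card_traces_Int:
  assumes "finite S"
  shows "card (traces S {A \<inter> B | A B. A \<in> F \<and> B \<in> G}) \<le> card (traces S F) * card (traces S G)"
proof -
  have "traces S {A \<inter> B | A B. A \<in> F \<and> B \<in> G} \<subseteq> (\<lambda>(X, Y). X \<inter> Y) ` (traces S F \<times> traces S G)"
  proof
    fix T assume "T \<in> traces S {A \<inter> B | A B. A \<in> F \<and> B \<in> G}"
    then obtain A B where "A \<in> F" "B \<in> G" "T = S \<inter> (A \<inter> B)"
      unfolding traces_def by blast
    then have "(S \<inter> A, S \<inter> B) \<in> traces S F \<times> traces S G" "T = (\<lambda>(X, Y). X \<inter> Y) (S \<inter> A, S \<inter> B)"
      unfolding traces_def by auto
    then show "T \<in> (\<lambda>(X, Y). X \<inter> Y) ` (traces S F \<times> traces S G)" by blast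
  qed
  then have "card (traces S {A \<inter> B | A B. A \<in> F \<and> B \<in> G}) \<le> card (traces S F \<times> traces S G)"
    using assms by (meson card_image_le card_mono finite_SigmaI finite_imageI finite_traces le_trans)
  then show ?thesis by (simp add: card_cartesian_product)
qed

lemma card_traces_image_Pi:
  assumes "finite S" "finite I"
    and trace_determined: "\<And>A B. (\<And>i. i \<in> I \<Longrightarrow> S \<inter> A i = S \<inter> B i) \<Longrightarrow> S \<inter> \<Phi> A = S \<inter> \<Phi> B"
  shows "card (traces S (\<Phi> ` Pi I F)) \<le> (\<Prod>i\<in>I. card (traces S (F i)))"
proof -
  have "traces S (\<Phi> ` Pi I F) \<subseteq> (\<lambda>g. S \<inter> \<Phi> g) ` PiE I (\<lambda>i. traces S (F i))"
  proof
    fix T assume "T \<in> traces S (\<Phi> ` Pi I F)"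
    then obtain A where A: "A \<in> Pi I F" and T: "T = S \<inter> \<Phi> A"
      unfolding traces_def by blast
    define g where "g = restrict (\<lambda>i. S \<inter> A i) I"
    have "g \<in> PiE I (\<lambda>i. traces S (F i))"
      using A unfolding g_def traces_def by auto
    moreover have "T = S \<inter> \<Phi> g"
      unfolding T g_def by (rule trace_determined) auto
    ultimately show "T \<in> (\<lambda>g. S \<inter> \<Phi> g) ` PiE I (\<lambda>i. traces S (F i))" by blast
  qed
  moreover have "finite (PiE I (\<lambda>i. traces S (F i)))"
    using assms(1,2) by (simp add: finite_PiE finite_traces)
  ultimately have "card (traces S (\<Phi> ` Pi I F)) \<le> card (PiE I (\<lambda>i. traces S (F i)))"
    by (meson card_image_le card_mono finite_imageI le_trans)
  then show ?thesis by (simp add: card_PiE assms(2))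
qed

definition box_cylinders :: "nat \<Rightarrow> ((nat \<Rightarrow> real) \<times> real) set set" where
  "box_cylinders d = {half_open_box d a b \<times> {..<c} | a b c. True}"

lemma card_traces_box_cylinders:
  assumes "finite S" "S \<subseteq> unit_cube d \<times> UNIV"
  shows "card (traces S (box_cylinders d)) \<le> (card S + 1) ^ (2*d+1)"
proof -
  define n where "n = card S"
  define Slab :: "nat \<Rightarrow> ((nat \<Rightarrow> real) \<times> real) set set"
    where "Slab j = {A \<inter> B | A B. A \<in> range (\<lambda>a. {p. a < fst p j}) \<and> B \<in> range (\<lambda>b. {p. fst p j \<le> b})}"
    for j
  define Boxes where "Boxes = (\<lambda>A. \<Inter>j<d. A j) ` Pi {..<d} Slab"
  define Below :: "((nat \<Rightarrow> real) \<times> real) set set" where "Below = range (\<lambda>c. {p. snd p < c})"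
  have slab: "card (traces S (Slab j)) \<le> (n + 1) ^ 2" for j
    unfolding Slab_def n_def power2_eq_square using assms(1)
    by (intro order_trans[OF card_traces_Int] mult_le_mono
        card_traces_strict_superlevel_sets card_traces_sublevel_sets)
  have "traces S (box_cylinders d) \<subseteq> traces S {A \<inter> B | A B. A \<in> Boxes \<and> B \<in> Below}"
  proof (rule traces_subsetI)
    fix X assume "X \<in> box_cylinders d"
    then obtain a b c where X: "X = half_open_box d a b \<times> {..<c}"
      unfolding box_cylinders_def by blast
    define A where "A j = {p. a j < fst p j} \<inter> {p :: (nat \<Rightarrow> real) \<times> real. fst p j \<le> b j}" for j
    have "(\<Inter>j<d. A j) \<in> Boxes" "{p. snd p < c} \<in> Below"
      unfolding Boxes_def A_def Slab_def Below_def by blast+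
    moreover have "S \<inter> X = S \<inter> ((\<Inter>j<d. A j) \<inter> {p. snd p < c})"
      using assms(2) unfolding X A_def half_open_box_def by auto
    ultimately show "\<exists>Y\<in>{A \<inter> B | A B. A \<in> Boxes \<and> B \<in> Below}. S \<inter> X = S \<inter> Y"
      by blast
  qed
  then have "card (traces S (box_cylinders d)) \<le> card (traces S {A \<inter> B | A B. A \<in> Boxes \<and> B \<in> Below})"
    using assms(1) by (intro card_mono finite_traces)
  also have "\<dots> \<le> card (traces S Boxes) * card (traces S Below)"
    using assms(1) by (rule card_traces_Int)
  also have "\<dots> \<le> ((n + 1) ^ 2) ^ d * (n + 1)"
    unfolding Boxes_def Below_def n_def using assms(1) slab[unfolded n_def]
    by (intro mult_le_mono order_trans[OF card_traces_image_Pi] prod_le_power card_traces_strict_sublevel_sets)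
       auto
  also have "\<dots> = (card S + 1) ^ (2*d+1)"
    unfolding n_def by (simp add: power_mult)
  finally show ?thesis .
qed

lemma card_traces_subgraphs_G_class:
  assumes "finite S" "S \<subseteq> unit_cube d \<times> UNIV"
  shows "card (traces S (subgraph (unit_cube d) ` G_class d t)) \<le> (card S + 1) ^ ((2*d+1)*t)"
proof -
  have "subgraph (unit_cube d) ` G_class d t \<subseteq> (\<lambda>A. \<Union>i<t. A i) ` Pi {..<t} (\<lambda>_. box_cylinders d)"
  proof
    fix G assume "G \<in> subgraph (unit_cube d) ` G_class d t"
    then obtain P c where P: "P \<in> mondrian d" "card P = t"
      and G: "G = subgraph (unit_cube d) (\<lambda>x. \<Sum>C\<in>P. c C * indicator C x)"
      unfolding G_class_def mondrian_t_def by blast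
    obtain e where e: "bij_betw e {..<t} P"
      using ex_bij_betw_nat_finite[OF mondrian_finite[OF P(1)]] P(2) by (auto simp: atLeast0LessThan)
    have "G = (\<Union>C\<in>P. C \<times> {..<c C})"
      unfolding G using mondrian_partition_on[OF P(1)] mondrian_finite[OF P(1)]
      by (rule subgraph_sum_indicator_partition)
    also have "\<dots> = (\<Union>i<t. e i \<times> {..<c (e i)})"
      using bij_betw_imp_surj_on[OF e] by auto
    finally have "G = (\<Union>i<t. e i \<times> {..<c (e i)})" .
    moreover have "(\<lambda>i. e i \<times> {..<c (e i)}) \<in> Pi {..<t} (\<lambda>_. box_cylinders d)"
      using mondrian_cell_is_box[OF P(1)] bij_betwE[OF e] unfolding box_cylinders_def by blast
    ultimately show "G \<in> (\<lambda>A. \<Union>i<t. A i) ` Pi {..<t} (\<lambda>_. box_cylinders d)" by blast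
  qed
  then have "card (traces S (subgraph (unit_cube d) ` G_class d t))
      \<le> card (traces S ((\<lambda>A. \<Union>i<t. A i) ` Pi {..<t} (\<lambda>_. box_cylinders d)))"
    using assms(1) by (intro card_mono finite_traces traces_mono)
  also have "\<dots> \<le> (\<Prod>i<t. card (traces S (box_cylinders d)))"
    using assms(1) by (intro card_traces_image_Pi) auto
  also have "\<dots> \<le> ((card S + 1) ^ (2*d+1)) ^ t"
    using card_traces_box_cylinders[OF assms] by (intro prod_le_power) (simp_all add: Suc_le_eq)
  finally show ?thesis by (simp only: power_mult)
qed

lemma two_pow_card_shattered_G_class:
  assumes "finite S" "S \<subseteq> unit_cube d \<times> UNIV" "shatters (unit_cube d) (G_class d t) S"
  shows "2 ^ card S \<le> (card S + 1) ^ ((2*d+1)*t)"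
proof -
  have "2 ^ card S = card (Pow S)"
    using assms(1) by (simp add: card_Pow)
  also have "\<dots> \<le> card (traces S (subgraph (unit_cube d) ` G_class d t))"
    using assms(1,3) by (intro card_mono finite_traces) (simp_all add: shatters_iff_Pow_subset_traces)
  also have "\<dots> \<le> (card S + 1) ^ ((2*d+1)*t)"
    using assms(1,2) by (rule card_traces_subgraphs_G_class)
  finally show ?thesis .
qed

lemma le_of_le_plus_mult_ln:
  fixes x a b :: real
  assumes "0 < x" "0 < b" "x \<le> a + b * ln x"
  shows "x \<le> 2 * a + 2 * b * ln (2 * b)"
proof -
  \<comment> \<open>ln lies below its tangent at 2b\<close>
  have "ln x - ln (2 * b) = ln (x / (2 * b))"
    using assms(1,2) by (simp add: ln_div)
  also have "\<dots> \<le> x / (2 * b) - 1"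
    using assms(1,2) by (intro ln_le_minus_one) simp
  finally have "b * (ln x - ln (2 * b)) \<le> b * (x / (2 * b) - 1)"
    using assms(2) by (intro mult_left_mono) simp_all
  also have "\<dots> = x / 2 - b"
    using assms(2) by (simp add: field_simps)
  finally show ?thesis
    using assms(2,3) by (simp add: algebra_simps)
qed

lemma le_t_ln_t_of_two_pow_le:
  fixes k :: nat
  assumes "k \<ge> 1"
  shows "\<exists>c>0. \<forall>N t::nat. 2 \<le> t \<longrightarrow> 2 ^ N \<le> (N + 1) ^ (k * t) \<longrightarrow> real N \<le> c * real t * ln (real t)"
proof -
  define L where "L = ln (2::real)"
  define K where "K = k / L"
  define c where "c = (1 + 2 * K * ln (2 * K)) / L + 2 * K"
  have "0 < L" "L < 1"
    using ln_2_less_1 unfolding L_def by auto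
  then have "1 < 2 * K"
    using assms unfolding K_def by (simp add: field_simps)
  then have "0 < ln (2 * K)" by simp
  have "real N \<le> c * real t * ln (real t)" if t: "2 \<le> t" and pow: "2 ^ N \<le> (N + 1) ^ (k * t)" for N t :: nat
  proof -
    define x where "x = real N + 1"
    define u where "u = real t * ln (real t)"
    have "0 < x" "0 < K * t"
      using \<open>1 < 2 * K\<close> t unfolding x_def by simp_all
    have "L \<le> ln t"
      using t unfolding L_def by simp
    have "real (2 ^ N) \<le> real ((N + 1) ^ (k * t))"
      using pow by (simp only: of_nat_le_iff)
    then have "(2::real) ^ N \<le> x ^ (k * t)"
      unfolding x_def by (simp add: add.commute)
    then have "ln (2 ^ N) \<le> ln (x ^ (k * t))"
      using \<open>0 < x\<close> by (intro ln_mono) simp_all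
    then have "N * L \<le> (k * t) * ln x"
      using \<open>0 < x\<close> by (simp add: ln_realpow L_def)
    then have "x * L \<le> L + (k * t) * ln x"
      unfolding x_def by (simp add: algebra_simps)
    then have "x \<le> 1 + (K * t) * ln x"
      using \<open>0 < L\<close> unfolding K_def by (simp add: field_simps)
    then have "x \<le> 2 * 1 + 2 * (K * t) * ln (2 * (K * t))"
      by (rule le_of_le_plus_mult_ln[OF \<open>0 < x\<close> \<open>0 < K * t\<close>])
    also have "ln (2 * (K * t)) = ln (2 * K) + ln t"
      using \<open>1 < 2 * K\<close> t by (subst mult.assoc[symmetric], subst ln_mult) simp_all
    finally have x_le: "x \<le> 2 + 2 * K * ln (2 * K) * t + 2 * K * u"
      unfolding u_def by (simp add: algebra_simps)
    have "2 * L \<le> u"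
      unfolding u_def using t \<open>L \<le> ln t\<close> \<open>0 < L\<close> by (intro mult_mono) simp_all
    then have "2 \<le> u / L"
      using \<open>0 < L\<close> by (simp add: field_simps)
    have "t * L \<le> u"
      unfolding u_def using \<open>L \<le> ln t\<close> by (intro mult_left_mono) simp_all
    then have "t \<le> u / L"
      using \<open>0 < L\<close> by (simp add: field_simps)
    then have "2 * K * ln (2 * K) * t \<le> 2 * K * ln (2 * K) * (u / L)"
      using \<open>1 < 2 * K\<close> \<open>0 < ln (2 * K)\<close> by (intro mult_left_mono) simp_all
    moreover have "c * u = u / L + 2 * K * ln (2 * K) * (u / L) + 2 * K * u"
      unfolding c_def using \<open>0 < L\<close> by (simp add: field_simps)
    ultimately have "x \<le> c * u"
      using x_le \<open>2 \<le> u / L\<close> by linarith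
    then show ?thesis
      unfolding x_def u_def by (simp add: mult.assoc)
  qed
  moreover have "c > 0"
    unfolding c_def using \<open>0 < L\<close> \<open>0 < ln (2 * K)\<close> \<open>1 < 2 * K\<close> by (simp add: add_pos_pos)
  ultimately show ?thesis by blast
qed

theorem lemmaA6:
  fixes d :: nat
  assumes "d \<ge> 1"
  shows "\<exists>c > (0::real). \<forall>t::nat. t \<ge> 2 \<longrightarrow>
           vc_dim (unit_cube d) (G_class d t) \<le> ereal (c * real t * ln (real t))"
proof -
  obtain c :: real where "c > 0" and c: "\<forall>N t::nat. 2 \<le> t \<longrightarrow> 2 ^ N \<le> (N + 1) ^ ((2*d+1) * t) \<longrightarrow> real N \<le> c * real t * ln (real t)"
    using le_t_ln_t_of_two_pow_le[of "2*d+1"] by auto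
  have "vc_dim (unit_cube d) (G_class d t) \<le> ereal (c * real t * ln (real t))" if "t \<ge> 2" for t
    unfolding vc_dim_def
  proof (rule Sup_least, clarify)
    fix S assume "finite S" "S \<subseteq> unit_cube d \<times> (UNIV :: real set)" "shatters (unit_cube d) (G_class d t) S"
    then show "ereal (card S) \<le> ereal (c * real t * ln (real t))"
      using two_pow_card_shattered_G_class c that by simp
  qed
  with \<open>c > 0\<close> show ?thesis by blast
qed

end
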